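(* Let $\mathcal S=(\{\lambda_r\}_{r\ge0},\{k_r\}_{r\ge1},\{C_{ij}^\ell\}_{i,j,\ell\in I})$ be a candidate spectrum satisfying (HB1)–(HB5), and satisfying (HB6) in the weak sense: whenever $i,j,i',j'\in I$ are such that both sides of (HB6) converge in $\overline{\mathbf R}+i\overline{\mathbf R}$, the two sides are equal in $\overline{\mathbf R}+i\overline{\mathbf R}$. Then for all $i,j\in I$ and all $N\ge0$, $$\sum_{\ell\in I}|\lambda_{\ell_1}|^N|C_{ij}^\ell|^2<\infty.$$
   Context: Candidate spectrum: reals $0=\lambda_0<\lambda_1\le\lambda_2\le\cdots\to\infty$, positive integers $k_1\le k_2\le\cdots\to\infty$, index set $I=\{(i_1,i_2)\in\mathbf Z^2: i_1>0\text{ or }(i_1,i_2)=(0,0)\text{ or }(i_1<0,\ |i_2|\ge k_{-i_1})\}$, and complex numbers $C_{ij}^\ell$ for $i,j,\ell\in I$. Conventions: $C_{ij}^\ell=0$ if some index is in $\mathbf Z^2\setminus I$; $\lambda_r=-k_{-r}(k_{-r}-1)$ for $r<0$; for $i=(i_1,i_2)$: $\bar i=(i_1,-i_2)$, $i^+=(i_1,i_2+1)$, $i^-=(i_1,i_2-1)$. (HB1) $C_{ij}^\ell=C_{ji}^\ell$; (HB2) $C_{ij}^\ell=0$ if $i_2+j_2\ne\ell_2$; (HB3) $\overline{C_{ij}^\ell}=C_{\bar i\bar j}^{\bar\ell}$; (HB4) for $i=(0,0)$, $C_{ij}^\ell=1$ if $j=\ell$ and $0$ otherwise; (HB5) $\sqrt{\lambda_{\ell_1}+\ell_2(\ell_2-1)}\,C_{ij}^{\ell^-}=\sqrt{\lambda_{i_1}+i_2(i_2+1)}\,C_{i^+j}^\ell+\sqrt{\lambda_{j_1}+j_2(j_2+1)}\,C_{ij^+}^\ell$;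 all for all $i,j,\ell\in I$. (HB6) is the equation $\sum_{\ell\in I}(-1)^{\ell_2}C_{ij}^\ell C_{i'j'}^{\bar\ell}=\sum_{\ell\in I}(-1)^{\ell_2}C_{ii'}^\ell C_{jj'}^{\bar\ell}$. An unordered sum $\sum x_k$ of reals converges in $\overline{\mathbf R}=[-\infty,\infty]$ if at least one of $\sum_{x_k>0}x_k$, $\sum_{x_k<0}x_k$ is finite; a sum $\sum z_k$ of complex numbers converges in $\overline{\mathbf R}+i\overline{\mathbf R}$ if both $\sum\operatorname{Re}z_k$ and $\sum\operatorname{Im}z_k$ converge in $\overline{\mathbf R}$, its value being then defined in $\overline{\mathbf R}+i\overline{\mathbf R}$. *)

theory Defs
  imports "HOL-Analysis.Analysis"
begin

type_synonym idx = "int \<times> int"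

text \<open>Index set I determined by the sequence k (k r is meaningful for r \<ge> 1).\<close>
definition idxI :: "(nat \<Rightarrow> nat) \<Rightarrow> idx set" where
  "idxI k = {(a, b). a > 0 \<or> (a, b) = (0, 0) \<or> (a < 0 \<and> \<bar>b\<bar> \<ge> int (k (nat (-a))))}"

definition lamZ :: "(nat \<Rightarrow> real) \<Rightarrow> (nat \<Rightarrow> nat) \<Rightarrow> int \<Rightarrow> real" where
  "lamZ lam k r = (if r \<ge> 0 then lam (nat r)
      else - real (k (nat (-r))) * (real (k (nat (-r))) - 1))"

definition ibar :: "idx \<Rightarrow> idx" where "ibar i = (fst i, - snd i)"
definition iplus :: "idx \<Rightarrow> idx" where "iplus i = (fst i, snd i + 1)"
definition iminus :: "idx \<Rightarrow> idx" where "iminus i = (fst i, snd i - 1)"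

definition candidate_spectrum :: "(nat \<Rightarrow> real) \<Rightarrow> (nat \<Rightarrow> nat) \<Rightarrow> (idx \<Rightarrow> idx \<Rightarrow> idx \<Rightarrow> complex) \<Rightarrow> bool" where
  "candidate_spectrum lam k C \<longleftrightarrow>
     lam 0 = 0 \<and> 0 < lam 1 \<and> mono lam \<and> filterlim lam at_top sequentially \<and>
     (\<forall>r\<ge>1. 0 < k r) \<and> (\<forall>r s. 1 \<le> r \<longrightarrow> r \<le> s \<longrightarrow> k r \<le> k s) \<and>
     filterlim k at_top sequentially \<and>
     (\<forall>i j l. i \<notin> idxI k \<or> j \<notin> idxI k \<or> l \<notin> idxI k \<longrightarrow> C i j l = 0)"

definition HB1 :: "(nat \<Rightarrow> nat) \<Rightarrow> (idx \<Rightarrow> idx \<Rightarrow> idx \<Rightarrow> complex) \<Rightarrow> bool" where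
  "HB1 k C \<longleftrightarrow> (\<forall>i\<in>idxI k. \<forall>j\<in>idxI k. \<forall>l\<in>idxI k. C i j l = C j i l)"

definition HB2 :: "(nat \<Rightarrow> nat) \<Rightarrow> (idx \<Rightarrow> idx \<Rightarrow> idx \<Rightarrow> complex) \<Rightarrow> bool" where
  "HB2 k C \<longleftrightarrow> (\<forall>i\<in>idxI k. \<forall>j\<in>idxI k. \<forall>l\<in>idxI k.
      snd i + snd j \<noteq> snd l \<longrightarrow> C i j l = 0)"

definition HB3 :: "(nat \<Rightarrow> nat) \<Rightarrow> (idx \<Rightarrow> idx \<Rightarrow> idx \<Rightarrow> complex) \<Rightarrow> bool" where
  "HB3 k C \<longleftrightarrow> (\<forall>i\<in>idxI k. \<forall>j\<in>idxI k. \<forall>l\<in>idxI k.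
      cnj (C i j l) = C (ibar i) (ibar j) (ibar l))"

definition HB4 :: "(nat \<Rightarrow> nat) \<Rightarrow> (idx \<Rightarrow> idx \<Rightarrow> idx \<Rightarrow> complex) \<Rightarrow> bool" where
  "HB4 k C \<longleftrightarrow> (\<forall>j\<in>idxI k. \<forall>l\<in>idxI k. C (0, 0) j l = (if j = l then 1 else 0))"

definition HB5 :: "(nat \<Rightarrow> real) \<Rightarrow> (nat \<Rightarrow> nat) \<Rightarrow> (idx \<Rightarrow> idx \<Rightarrow> idx \<Rightarrow> complex) \<Rightarrow> bool" where
  "HB5 lam k C \<longleftrightarrow> (\<forall>i\<in>idxI k. \<forall>j\<in>idxI k. \<forall>l\<in>idxI k.
      complex_of_real (sqrt (lamZ lam k (fst l) + real_of_int (snd l * (snd l - 1)))) * C i j (iminus l)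
    = complex_of_real (sqrt (lamZ lam k (fst i) + real_of_int (snd i * (snd i + 1)))) * C (iplus i) j l
    + complex_of_real (sqrt (lamZ lam k (fst j) + real_of_int (snd j * (snd j + 1)))) * C i (iplus j) l)"

text \<open>Unordered sums of reals in the extended reals: positive and negative parts
  (as sums in [0,\<infinity>]); the sum converges in [-\<infinity>,\<infinity>] if at least one part is finite,
  and its value is then the difference.\<close>
definition pos_part_sum :: "('a \<Rightarrow> real) \<Rightarrow> 'a set \<Rightarrow> ennreal" where
  "pos_part_sum x A = (\<integral>\<^sup>+ a. ennreal (max 0 (x a)) \<partial>count_space A)"

definition neg_part_sum :: "('a \<Rightarrow> real) \<Rightarrow> 'a set \<Rightarrow> ennreal" where
  "neg_part_sum x A = (\<integral>\<^sup>+ a. ennreal (max 0 (- x a)) \<partial>count_space A)"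

definition ereal_sum_converges :: "('a \<Rightarrow> real) \<Rightarrow> 'a set \<Rightarrow> bool" where
  "ereal_sum_converges x A \<longleftrightarrow> pos_part_sum x A < \<infinity> \<or> neg_part_sum x A < \<infinity>"

definition ereal_sum_value :: "('a \<Rightarrow> real) \<Rightarrow> 'a set \<Rightarrow> ereal" where
  "ereal_sum_value x A = enn2ereal (pos_part_sum x A) - enn2ereal (neg_part_sum x A)"

text \<open>Complex sums converge in R-bar + i R-bar iff real and imaginary parts both converge.\<close>
definition csum_converges :: "('a \<Rightarrow> complex) \<Rightarrow> 'a set \<Rightarrow> bool" where
  "csum_converges z A \<longleftrightarrow> ereal_sum_converges (\<lambda>a. Re (z a)) A \<and> ereal_sum_converges (\<lambda>a. Im (z a)) A"

definition csum_value :: "('a \<Rightarrow> complex) \<Rightarrow> 'a set \<Rightarrow> ereal \<times> ereal" where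
  "csum_value z A = (ereal_sum_value (\<lambda>a. Re (z a)) A, ereal_sum_value (\<lambda>a. Im (z a)) A)"

definition HB6_weak :: "(nat \<Rightarrow> nat) \<Rightarrow> (idx \<Rightarrow> idx \<Rightarrow> idx \<Rightarrow> complex) \<Rightarrow> bool" where
  "HB6_weak k C \<longleftrightarrow> (\<forall>i\<in>idxI k. \<forall>j\<in>idxI k. \<forall>i'\<in>idxI k. \<forall>j'\<in>idxI k.
     (let L = (\<lambda>l. (-1) ^ nat \<bar>snd l\<bar> * C i j l * C i' j' (ibar l));
          R = (\<lambda>l. (-1) ^ nat \<bar>snd l\<bar> * C i i' l * C j j' (ibar l))
      in csum_converges L (idxI k) \<and> csum_converges R (idxI k) \<longrightarrow>
         csum_value L (idxI k) = csum_value R (idxI k)))"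

end

theory Submission
  imports Defs
begin

text \<open>
  Write a_i(t) = C_{i, bar i}^{(t,0)} for the diagonal coefficients, alpha_i for the coefficient
  sqrt(lambda_{i_1} + i_2 (i_2 + 1)) of (HB5), and i+, i- for i with raised or lowered second
  component. The a_i(t) are real, and applying (HB5) twice gives the three-term recursion
    lambda_t a_i = alpha_i^2 (a_i + a_{i+}) + alpha_{i-}^2 (a_{i-} + a_i).
  Weak (HB6) for the quadruple (i, bar i, i+, bar i+) equates sum_t a_i a_{i+} with
  - sum_l |C_{i,i+}^l|^2 <= 0, so its positive part is finite as soon as its negative part is.
  As lambda_t tends to infinity, the recursion bounds that negative part and then forces
  sum_t a_i(t)^2 < infinity, by induction on i_2 >= 0. Weak (HB6) for (i, j, bar i, bar j) now
  equates +- sum_l |C_{ij}^l|^2 with the finite sum sum_t a_i a_j. Finally (HB5) bounds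
  lambda_t |C_{ij}^{(t,w)}|^2 by squares of coefficients with a raised index, which gives the
  weights lambda^N by induction on N; on the line l_2 = i_2 + j_2 only finitely many indices
  have l_1 < 0.
\<close>

subsection \<open>Unordered sums in the extended reals\<close>

lemma nn_integral_count_space_less_top_iff_summable_on:
  fixes f :: "'a \<Rightarrow> real"
  assumes "\<And>x. x \<in> A \<Longrightarrow> 0 \<le> f x"
  shows "(\<integral>\<^sup>+x. ennreal (f x) \<partial>count_space A) < \<infinity> \<longleftrightarrow> f summable_on A"
proof -
  have "(\<integral>\<^sup>+x. ennreal (f x) \<partial>count_space A) = (\<integral>\<^sup>+x. ennreal (norm (f x)) \<partial>count_space A)"
    by (rule nn_integral_cong) (simp add: assms)
  then have "(\<integral>\<^sup>+x. ennreal (f x) \<partial>count_space A) < \<infinity> \<longleftrightarrow> integrable (count_space A) f"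
    by (simp add: integrable_iff_bounded)
  also have "\<dots> \<longleftrightarrow> Infinite_Set_Sum.abs_summable_on f A"
    by (rule Infinite_Set_Sum.abs_summable_on_def[symmetric])
  also have "\<dots> \<longleftrightarrow> f summable_on A"
    by (rule abs_summable_equivalent[symmetric, THEN trans])
      (rule summable_on_iff_abs_summable_on_real[symmetric])
  finally show ?thesis .
qed

lemma pos_part_sum_less_top_iff: "pos_part_sum x A < \<infinity> \<longleftrightarrow> (\<lambda>a. max 0 (x a)) summable_on A"
  unfolding pos_part_sum_def by (rule nn_integral_count_space_less_top_iff_summable_on) simp

lemma neg_part_sum_less_top_iff: "neg_part_sum x A < \<infinity> \<longleftrightarrow> (\<lambda>a. max 0 (- x a)) summable_on A"
  unfolding neg_part_sum_def by (rule nn_integral_count_space_less_top_iff_summable_on) simp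

lemma pos_part_sum_eq_0: "(\<And>a. a \<in> A \<Longrightarrow> x a \<le> 0) \<Longrightarrow> pos_part_sum x A = 0"
  unfolding pos_part_sum_def by (subst nn_integral_cong[where v = "\<lambda>_. 0"]) auto

lemma neg_part_sum_eq_0: "(\<And>a. a \<in> A \<Longrightarrow> 0 \<le> x a) \<Longrightarrow> neg_part_sum x A = 0"
  unfolding neg_part_sum_def by (subst nn_integral_cong[where v = "\<lambda>_. 0"]) auto

lemma ereal_sum_converges_nonneg: "(\<And>a. a \<in> A \<Longrightarrow> 0 \<le> x a) \<Longrightarrow> ereal_sum_converges x A"
  by (simp add: ereal_sum_converges_def neg_part_sum_eq_0)

lemma ereal_sum_converges_nonpos: "(\<And>a. a \<in> A \<Longrightarrow> x a \<le> 0) \<Longrightarrow> ereal_sum_converges x A"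
  by (simp add: ereal_sum_converges_def pos_part_sum_eq_0)

lemma ereal_sum_value_nonpos: "(\<And>a. a \<in> A \<Longrightarrow> x a \<le> 0) \<Longrightarrow> ereal_sum_value x A \<le> 0"
  by (simp add: ereal_sum_value_def pos_part_sum_eq_0 zero_ennreal.rep_eq)

lemma ereal_sum_value_eq_PInf:
  assumes "pos_part_sum x A = \<infinity>" and "neg_part_sum x A < \<infinity>"
  shows "ereal_sum_value x A = \<infinity>"
proof -
  obtain n where "neg_part_sum x A = ennreal n" "0 \<le> n"
    using assms(2) by (cases "neg_part_sum x A" rule: ennreal_cases) auto
  then show ?thesis
    using assms(1) by (simp add: ereal_sum_value_def enn2ereal_ennreal)
qed

lemma ereal_sum_value_eq_MInf:
  assumes "pos_part_sum x A < \<infinity>" and "neg_part_sum x A = \<infinity>"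
  shows "ereal_sum_value x A = - \<infinity>"
proof -
  obtain p where "pos_part_sum x A = ennreal p" "0 \<le> p"
    using assms(1) by (cases "pos_part_sum x A" rule: ennreal_cases) auto
  then show ?thesis
    using assms(2) by (simp add: ereal_sum_value_def enn2ereal_ennreal)
qed

lemma summable_on_pos_part_if_ereal_sum_value_neq_PInf:
  assumes "(\<lambda>a. max 0 (- x a)) summable_on A" and "ereal_sum_value x A \<noteq> \<infinity>"
  shows "(\<lambda>a. max 0 (x a)) summable_on A"
proof -
  have neg: "neg_part_sum x A < \<infinity>"
    using assms(1) by (simp only: neg_part_sum_less_top_iff)
  have "pos_part_sum x A \<noteq> \<infinity>"
  proof
    assume "pos_part_sum x A = \<infinity>"
    from ereal_sum_value_eq_PInf[OF this neg] assms(2) show False by simp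
  qed
  then show ?thesis
    by (simp add: pos_part_sum_less_top_iff[symmetric] less_top[symmetric])
qed

lemma ereal_sum_value_finite:
  assumes "pos_part_sum x A < \<infinity>" and "neg_part_sum x A < \<infinity>"
  shows "\<bar>ereal_sum_value x A\<bar> \<noteq> \<infinity>"
proof -
  obtain p where "pos_part_sum x A = ennreal p" "0 \<le> p"
    using assms(1) by (cases "pos_part_sum x A" rule: ennreal_cases) auto
  moreover obtain n where "neg_part_sum x A = ennreal n" "0 \<le> n"
    using assms(2) by (cases "neg_part_sum x A" rule: ennreal_cases) auto
  ultimately show ?thesis
    by (simp add: ereal_sum_value_def enn2ereal_ennreal)
qed

lemma summable_on_if_ereal_sum_value_finite:
  fixes x :: "'a \<Rightarrow> real"
  assumes conv: "ereal_sum_converges x A" and fin: "\<bar>ereal_sum_value x A\<bar> \<noteq> \<infinity>"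
  shows "x summable_on A"
proof -
  have pos: "pos_part_sum x A < \<infinity>"
  proof (rule ccontr)
    assume "\<not> pos_part_sum x A < \<infinity>"
    then have "pos_part_sum x A = \<infinity>"
      by (simp add: less_top[symmetric])
    moreover from this conv have "neg_part_sum x A < \<infinity>"
      by (simp add: ereal_sum_converges_def)
    ultimately have "ereal_sum_value x A = \<infinity>"
      by (rule ereal_sum_value_eq_PInf)
    with fin show False
      by simp
  qed
  have neg: "neg_part_sum x A < \<infinity>"
  proof (rule ccontr)
    assume "\<not> neg_part_sum x A < \<infinity>"
    then have "neg_part_sum x A = \<infinity>"
      by (simp add: less_top[symmetric])
    with pos have "ereal_sum_value x A = - \<infinity>"
      by (rule ereal_sum_value_eq_MInf)
    with fin show False
      by simp
  qed
  have "(\<lambda>a. max 0 (x a) + - max 0 (- x a)) summable_on A"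
    using pos neg unfolding pos_part_sum_less_top_iff neg_part_sum_less_top_iff
    by (intro summable_on_add) (simp_all only: summable_on_uminus)
  also have "(\<lambda>a. max 0 (x a) + - max 0 (- x a)) = x"
    by (auto simp: max_def)
  finally show ?thesis .
qed

lemma ereal_sum_finite_if_summable_on:
  fixes x :: "'a \<Rightarrow> real"
  assumes "x summable_on A"
  shows "ereal_sum_converges x A" and "\<bar>ereal_sum_value x A\<bar> \<noteq> \<infinity>"
proof -
  have abs: "(\<lambda>a. \<bar>x a\<bar>) summable_on A"
    using assms summable_on_iff_abs_summable_on_real[THEN iffD1] by simp
  have "(\<lambda>a. max 0 (x a)) summable_on A" "(\<lambda>a. max 0 (- x a)) summable_on A"
    by (rule summable_on_comparison_test[OF abs]; simp)+
  then have "pos_part_sum x A < \<infinity>" "neg_part_sum x A < \<infinity>"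
    unfolding pos_part_sum_less_top_iff neg_part_sum_less_top_iff .
  then show "ereal_sum_converges x A" and "\<bar>ereal_sum_value x A\<bar> \<noteq> \<infinity>"
    unfolding ereal_sum_converges_def by (simp_all add: ereal_sum_value_finite)
qed

lemma csum_converges_real:
  assumes "\<And>a. a \<in> A \<Longrightarrow> Im (z a) = 0"
  shows "csum_converges z A \<longleftrightarrow> ereal_sum_converges (\<lambda>a. Re (z a)) A"
  unfolding csum_converges_def using ereal_sum_converges_nonneg[of A "\<lambda>a. Im (z a)"] assms by simp

lemma summable_square_if_recursive_bound:
  fixes x y h lam :: "nat \<Rightarrow> real"
  assumes lam: "filterlim lam at_top sequentially" and c: "0 < c"
    and h: "\<And>t. 0 \<le> h t" "summable h"
    and bound: "\<And>t. 1 \<le> t \<Longrightarrow> (lam t - K) * (x t)\<^sup>2 - h t \<le> c * (x t * y t)"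
    and pos_part: "summable (\<lambda>t. max 0 (- (x t * y t))) \<Longrightarrow> summable (\<lambda>t. max 0 (x t * y t))"
  shows "summable (\<lambda>t. (x t)\<^sup>2)"
proof -
  have "eventually (\<lambda>t. K + 1 \<le> lam t) sequentially"
    using lam by (simp add: filterlim_at_top)
  moreover have "eventually (\<lambda>t. 1 \<le> t) sequentially"
    by (rule eventually_ge_at_top)
  ultimately have ev: "eventually (\<lambda>t. 1 \<le> t \<and> K + 1 \<le> lam t) sequentially"
    by eventually_elim simp
  have square_bound: "(x t)\<^sup>2 \<le> c * (x t * y t) + h t"
    and product_bound: "- (x t * y t) \<le> h t / c"
    if "1 \<le> t \<and> K + 1 \<le> lam t" for t
  proof -
    have "(x t)\<^sup>2 \<le> (lam t - K) * (x t)\<^sup>2"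
      using that mult_right_mono[of 1 "lam t - K" "(x t)\<^sup>2"] by simp
    with bound[of t] that show "(x t)\<^sup>2 \<le> c * (x t * y t) + h t"
      by linarith
    then have "- h t \<le> c * (x t * y t)"
      using zero_le_power2[of "x t"] by linarith
    with c show "- (x t * y t) \<le> h t / c"
      by (simp add: field_simps)
  qed
  have "summable (\<lambda>t. max 0 (- (x t * y t)))"
  proof (rule summable_comparison_test_ev)
    show "eventually (\<lambda>t. norm (max 0 (- (x t * y t))) \<le> h t / c) sequentially"
      using ev
    proof eventually_elim
      case (elim t)
      have "0 \<le> h t / c"
        using h(1)[of t] c by simp
      with product_bound[OF elim] show ?case
        by simp
    qed
    show "summable (\<lambda>t. h t / c)"
      using h(2) by (rule summable_divide)
  qed
  then have "summable (\<lambda>t. c * max 0 (x t * y t) + h t)"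
    by (intro summable_add summable_mult pos_part h(2))
  then show ?thesis
  proof (rule summable_comparison_test_ev[rotated])
    show "eventually (\<lambda>t. norm ((x t)\<^sup>2) \<le> c * max 0 (x t * y t) + h t) sequentially"
      using ev
    proof eventually_elim
      case (elim t)
      have "c * (x t * y t) \<le> c * max 0 (x t * y t)"
        using c by (intro mult_left_mono) auto
      with square_bound[OF elim] show ?case
        by simp
    qed
  qed
qed

subsection \<open>Rows of the index set\<close>

lemma ibar_ibar [simp]: "ibar (ibar i) = i"
  and iplus_iminus [simp]: "iplus (iminus i) = i"
  and iminus_iplus [simp]: "iminus (iplus i) = i"
  and ibar_iminus: "ibar (iminus i) = iplus (ibar i)"
  by (simp_all add: ibar_def iplus_def iminus_def)

lemma ibar_in_idxI_iff [simp]: "ibar i \<in> idxI k \<longleftrightarrow> i \<in> idxI k"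
  by (cases i) (auto simp: idxI_def ibar_def)

lemma finite_idxI_row_neg:
  assumes "filterlim k at_top sequentially"
  shows "finite {l \<in> idxI k. snd l = w \<and> fst l < 0}"
proof -
  have "eventually (\<lambda>r. Suc (nat \<bar>w\<bar>) \<le> k r) sequentially"
    using assms by (simp add: filterlim_at_top)
  then obtain r0 where r0: "\<And>r. r0 \<le> r \<Longrightarrow> nat \<bar>w\<bar> < k r"
    by (auto simp: eventually_sequentially Suc_le_eq)
  have "{l \<in> idxI k. snd l = w \<and> fst l < 0} \<subseteq> {- int r0..0} \<times> {w}"
  proof
    fix l assume l: "l \<in> {l \<in> idxI k. snd l = w \<and> fst l < 0}"
    then have "k (nat (- fst l)) \<le> nat \<bar>w\<bar>"
      by (cases l) (auto simp: idxI_def)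
    then have "nat (- fst l) < r0"
      using r0 not_le by blast
    with l show "l \<in> {- int r0..0} \<times> {w}"
      by (cases l) auto
  qed
  then show ?thesis
    by (rule finite_subset) simp
qed

lemma summable_on_idxI_row_iff:
  fixes f :: "idx \<Rightarrow> real"
  assumes k: "filterlim k at_top sequentially"
    and supp: "\<And>l. f l \<noteq> 0 \<Longrightarrow> l \<in> idxI k \<and> snd l = w"
  shows "f summable_on idxI k \<longleftrightarrow> (\<lambda>t. f (int t, w)) summable_on UNIV"
proof -
  define g where "g t = (int t, w)" for t :: nat
  define F where "F = {l \<in> idxI k. snd l = w \<and> fst l < 0}"
  have "finite F"
    unfolding F_def using k by (rule finite_idxI_row_neg)
  have "f summable_on idxI k \<longleftrightarrow> f summable_on (range g \<union> F)"
  proof (rule summable_on_cong_neutral)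
    fix l assume l: "l \<in> idxI k - (range g \<union> F)"
    show "f l = 0"
    proof (rule ccontr)
      assume "f l \<noteq> 0"
      with supp l have "snd l = w" "0 \<le> fst l"
        by (auto simp: F_def)
      then have "l = g (nat (fst l))"
        by (cases l) (simp add: g_def)
      with l show False
        by blast
    qed
  qed (use supp in blast)+
  also have "\<dots> \<longleftrightarrow> f summable_on range g"
    using \<open>finite F\<close> summable_on_union[of f "range g" F]
      summable_on_subset_banach[of f "range g \<union> F" "range g"]
    by (intro iffI) simp_all
  also have "\<dots> \<longleftrightarrow> (\<lambda>t. f (int t, w)) summable_on UNIV"
    by (subst summable_on_reindex) (auto simp: inj_on_def g_def comp_def)
  finally show ?thesis .
qed

locale weak_HB_spectrum =
  fixes lam :: "nat \<Rightarrow> real" and k :: "nat \<Rightarrow> nat" and C :: "idx \<Rightarrow> idx \<Rightarrow> idx \<Rightarrow> complex"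
  assumes candidate: "candidate_spectrum lam k C"
    and HB1: "HB1 k C" and HB2: "HB2 k C" and HB3: "HB3 k C" and HB4: "HB4 k C"
    and HB5: "HB5 lam k C" and HB6: "HB6_weak k C"
begin

abbreviation I :: "idx set" where "I \<equiv> idxI k"

subsection \<open>Diagonal coefficients and their recursion\<close>

lemma lam_0: "lam 0 = 0"
  and lam_tendsto: "filterlim lam at_top sequentially"
  and k_tendsto: "filterlim k at_top sequentially"
  using candidate by (simp_all add: candidate_spectrum_def)

lemma lam_pos: "1 \<le> t \<Longrightarrow> 0 < lam t"
  using candidate unfolding candidate_spectrum_def mono_def by (meson less_le_trans)

lemma lam_nonneg: "0 \<le> lam t"
  using lam_pos[of t] lam_0 by (cases t) auto

lemma k_pos: "1 \<le> r \<Longrightarrow> 0 < k r"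
  using candidate by (simp add: candidate_spectrum_def)

lemma lamZ_of_nat [simp]: "lamZ lam k (int t) = lam t"
  by (simp add: lamZ_def)

lemma row_in_idxI: "1 \<le> t \<Longrightarrow> (int t, w) \<in> I"
  and row0_in_idxI [simp]: "(int t, 0) \<in> I"
  by (auto simp: idxI_def)

lemma idxI_fst_nonneg:
  assumes "l \<in> I" and "snd l = 0"
  shows "0 \<le> fst l"
proof (rule ccontr)
  assume neg: "\<not> 0 \<le> fst l"
  then have "1 \<le> nat (- fst l)"
    by simp
  from k_pos[OF this] neg assms show False
    by (cases l) (auto simp: idxI_def)
qed

lemma C_eq_0_outside: "i \<notin> I \<or> j \<notin> I \<or> l \<notin> I \<Longrightarrow> C i j l = 0"
  using candidate unfolding candidate_spectrum_def by blast

lemma C_commute: "C i j l = C j i l"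
  using HB1 C_eq_0_outside unfolding HB1_def by metis

lemma C_eq_0_if_snd_ne: "snd i + snd j \<noteq> snd l \<Longrightarrow> C i j l = 0"
  using HB2 C_eq_0_outside unfolding HB2_def by metis

lemma C_neq_0_imp: "C i j l \<noteq> 0 \<Longrightarrow> l \<in> I \<and> snd l = snd i + snd j"
  using C_eq_0_outside[of i j l] C_eq_0_if_snd_ne[of i j l] by (metis add.commute)

lemma cnj_C: "cnj (C i j l) = C (ibar i) (ibar j) (ibar l)"
  using HB3 C_eq_0_outside ibar_in_idxI_iff unfolding HB3_def by (metis complex_cnj_zero)

lemma C_identity: "C (0, 0) (0, 0) (int t, 0) = (if t = 0 then 1 else 0)"
  using HB4 row0_in_idxI[of 0] row0_in_idxI[of t] unfolding HB4_def by force

definition ladder :: "idx \<Rightarrow> real" where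
  "ladder i = sqrt (lamZ lam k (fst i) + of_int (snd i * (snd i + 1)))"

lemma ladder_ibar: "ladder (ibar i) = ladder (iminus i)"
  by (simp add: ladder_def ibar_def iminus_def algebra_simps)

lemma C_ladder:
  assumes "i \<in> I" "j \<in> I" "l \<in> I"
  shows "of_real (ladder (iminus l)) * C i j (iminus l)
      = of_real (ladder i) * C (iplus i) j l + of_real (ladder j) * C i (iplus j) l"
proof -
  have "ladder (iminus l) = sqrt (lamZ lam k (fst l) + of_int (snd l * (snd l - 1)))"
    by (simp add: ladder_def iminus_def mult.commute)
  with HB5 assms show ?thesis
    unfolding HB5_def ladder_def[of i] ladder_def[of j] by simp
qed

lemma ladder_pos:
  assumes i: "i \<in> I" and "0 \<le> snd i" and "i \<noteq> (0, 0)"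
  shows "0 < ladder i"
proof -
  obtain a b where ab: "i = (a, b)" and "0 \<le> b" and "(a, b) \<noteq> (0, 0)"
    using assms by (cases i) auto
  have "0 < lamZ lam k a + of_int (b * (b + 1))"
  proof (cases "0 \<le> a")
    case True
    have "0 \<le> lamZ lam k a"
      using True lam_nonneg by (simp add: lamZ_def)
    moreover have "0 \<le> real_of_int (b * (b + 1))"
      using \<open>0 \<le> b\<close> by simp
    moreover have "0 < lamZ lam k a \<or> 0 < real_of_int (b * (b + 1))"
    proof (cases "a = 0")
      case True
      then have "0 < b"
        using \<open>0 \<le> b\<close> \<open>(a, b) \<noteq> (0, 0)\<close> by simp
      then show ?thesis
        by simp
    next
      case False
      then have "1 \<le> nat a"
        using \<open>0 \<le> a\<close> by simp
      then show ?thesis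
        using \<open>0 \<le> a\<close> lam_pos by (simp add: lamZ_def)
    qed
    ultimately show ?thesis
      by linarith
  next
    case False
    define m where "m = k (nat (- a))"
    have "int m \<le> b"
      using i False \<open>0 \<le> b\<close> by (auto simp: ab idxI_def m_def)
    then have "real m * (real m + 1) \<le> of_int b * (of_int b + 1)"
      by (intro mult_mono) auto
    moreover have "lamZ lam k a = - real m * (real m - 1)"
      using False by (simp add: lamZ_def m_def)
    moreover have "0 < m"
      using False k_pos[of "nat (- a)"] by (simp add: m_def)
    ultimately show ?thesis
      by (simp add: algebra_simps)
  qed
  then show ?thesis
    by (simp add: ladder_def ab)
qed

definition diag :: "idx \<Rightarrow> nat \<Rightarrow> real" where
  "diag i t = Re (C i (ibar i) (int t, 0))"

lemma C_diag: "C i (ibar i) (int t, 0) = of_real (diag i t)"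
proof -
  have "ibar (int t, 0) = (int t, 0)"
    by (simp add: ibar_def)
  then have "cnj (C i (ibar i) (int t, 0)) = C i (ibar i) (int t, 0)"
    by (simp add: cnj_C C_commute[of "ibar i" i])
  then have "Im (cnj (C i (ibar i) (int t, 0))) = Im (C i (ibar i) (int t, 0))"
    by (rule arg_cong)
  then have "Im (C i (ibar i) (int t, 0)) = 0"
    by simp
  then show ?thesis
    by (simp add: diag_def complex_eq_iff)
qed

lemma diag_ibar: "diag (ibar i) t = diag i t"
  by (simp add: diag_def C_commute[of "ibar i"])

lemma diag_eq_0_outside: "i \<notin> I \<Longrightarrow> diag i t = 0"
  by (simp add: diag_def C_eq_0_outside)

lemma diag_identity: "diag (0, 0) t = (if t = 0 then 1 else 0)"
  using C_identity[of t] by (simp add: diag_def ibar_def)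

lemma C_raise_diag:
  assumes j: "j \<in> I" and "iplus j \<in> I"
  shows "of_real (sqrt (lam t)) * C (iplus j) (ibar j) (int t, 1)
    = of_real (ladder j * (diag j t + diag (iplus j) t))"
proof -
  \<comment> \<open>(HB5) for the pair \<open>(bar j\<^sup>+, j)\<close> at \<open>(t, 0)\<close> lands in row \<open>-1\<close>;
    (HB3) reflects it to row \<open>1\<close>\<close>
  define x where "x = ibar (iplus j)"
  have "x \<in> I"
    using assms by (simp add: x_def)
  have row: "iminus (int t, 0) = (int t, - 1)" "ladder (int t, - 1) = sqrt (lam t)"
    by (simp_all add: iminus_def ladder_def)
  have x: "ladder x = ladder j" "iplus x = ibar j"
    by (simp_all add: x_def ladder_ibar) (simp add: ibar_def iplus_def)
  have "C (ibar j) j (int t, 0) = of_real (diag j t)"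
    "C x (iplus j) (int t, 0) = of_real (diag (iplus j) t)"
    by (simp_all add: x_def C_commute[of "ibar _"] C_diag)
  with C_ladder[OF \<open>x \<in> I\<close> j row0_in_idxI, of t]
  have "of_real (sqrt (lam t)) * C x j (int t, - 1)
      = of_real (ladder j * (diag j t + diag (iplus j) t))"
    unfolding row x by (simp add: distrib_left)
  then have "cnj (of_real (sqrt (lam t)) * C x j (int t, - 1))
      = of_real (ladder j * (diag j t + diag (iplus j) t))"
    by simp
  then show ?thesis
    by (simp add: cnj_C x_def ibar_def)
qed

lemma diag_recursion:
  assumes i: "i \<in> I" and "iplus i \<in> I" and t: "1 \<le> t"
  shows "lam t * diag i t = (ladder i)\<^sup>2 * (diag i t + diag (iplus i) t)
    + (if iminus i \<in> I then (ladder (iminus i))\<^sup>2 * (diag (iminus i) t + diag i t) else 0)"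
    (is "_ = ?rhs")
proof -
  define s :: complex where "s = of_real (sqrt (lam t))"
  define c where "c = C i (ibar (iminus i)) (int t, 1)"
  have lower_term: "s * c = of_real (if iminus i \<in> I
      then ladder (iminus i) * (diag (iminus i) t + diag i t) else 0)"
  proof (cases "iminus i \<in> I")
    case True
    from C_raise_diag[OF True] i True show ?thesis
      by (simp add: s_def c_def)
  qed (simp add: c_def C_eq_0_outside)
  have row: "iminus (int t, 1) = (int t, 0)" "ladder (int t, 0) = sqrt (lam t)"
    by (simp_all add: iminus_def ladder_def)
  have "ibar i \<in> I"
    using i by simp
  from C_ladder[OF i this row_in_idxI[OF t, of 1]]
  have ladder_eq: "s * of_real (diag i t)
      = of_real (ladder i) * C (iplus i) (ibar i) (int t, 1) + of_real (ladder (iminus i)) * c"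
    unfolding row ladder_ibar ibar_iminus[symmetric] C_diag by (simp add: s_def c_def)
  have "sqrt (lam t) * sqrt (lam t) = lam t"
    using lam_nonneg by simp
  then have "of_real (lam t * diag i t) = s * (s * of_real (diag i t))"
    unfolding s_def by (simp only: of_real_mult[symmetric] mult.assoc[symmetric])
  also have "\<dots> = of_real (ladder i) * (s * C (iplus i) (ibar i) (int t, 1))
      + of_real (ladder (iminus i)) * (s * c)"
    unfolding ladder_eq by (simp add: algebra_simps)
  also have "\<dots> = of_real (ladder i * (ladder i * (diag i t + diag (iplus i) t))
      + ladder (iminus i) * (if iminus i \<in> I
          then ladder (iminus i) * (diag (iminus i) t + diag i t) else 0))"
    unfolding s_def C_raise_diag[OF assms(1,2)] lower_term[unfolded s_def] by simp
  also have "\<dots> = of_real ?rhs"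
    by (simp add: power2_eq_square)
  finally show ?thesis
    by (simp only: of_real_eq_iff)
qed

subsection \<open>Square-summability of the structure constants\<close>

definition HB6_term :: "idx \<Rightarrow> idx \<Rightarrow> idx \<Rightarrow> idx \<Rightarrow> idx \<Rightarrow> complex" where
  "HB6_term i j i' j' l = (- 1) ^ nat \<bar>snd l\<bar> * C i j l * C i' j' (ibar l)"

lemma HB6_real_parts_eq:
  assumes "i \<in> I" "j \<in> I" "i' \<in> I" "j' \<in> I"
    and "\<And>l. Im (HB6_term i j i' j' l) = 0" "\<And>l. Im (HB6_term i i' j j' l) = 0"
    and "ereal_sum_converges (\<lambda>l. Re (HB6_term i j i' j' l)) I"
    and "ereal_sum_converges (\<lambda>l. Re (HB6_term i i' j j' l)) I"
  shows "ereal_sum_value (\<lambda>l. Re (HB6_term i j i' j' l)) I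
    = ereal_sum_value (\<lambda>l. Re (HB6_term i i' j j' l)) I"
proof -
  have "csum_converges (HB6_term i j i' j') I" "csum_converges (HB6_term i i' j j') I"
    using assms(5-8) by (simp_all add: csum_converges_real)
  with HB6 assms(1-4)
  have "csum_value (HB6_term i j i' j') I = csum_value (HB6_term i i' j j') I"
    unfolding HB6_weak_def Let_def HB6_term_def[abs_def] by blast
  then show ?thesis
    by (simp add: csum_value_def)
qed

lemma HB6_term_diag:
  "HB6_term i (ibar i) j (ibar j) l
    = (if l \<in> I \<and> snd l = 0 then of_real (diag i (nat (fst l)) * diag j (nat (fst l))) else 0)"
proof (cases "l \<in> I \<and> snd l = 0")
  case True
  then obtain n where l: "l = (int n, 0)"
    using idxI_fst_nonneg[of l] by (cases l) (auto elim: nonneg_int_cases)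
  then have "ibar l = l"
    by (simp add: ibar_def)
  with True show ?thesis
    by (simp add: HB6_term_def l C_diag)
next
  case False
  then have "C i (ibar i) l = 0"
    using C_eq_0_outside[of i "ibar i" l] C_eq_0_if_snd_ne[of i "ibar i" l] by (auto simp: ibar_def)
  then show ?thesis
    unfolding if_not_P[OF False] HB6_term_def by simp
qed

lemma HB6_term_conj:
  "HB6_term i j (ibar i) (ibar j) l = (- 1) ^ nat \<bar>snd i + snd j\<bar> * of_real ((cmod (C i j l))\<^sup>2)"
proof (cases "snd i + snd j = snd l")
  case True
  have "C i j l * C (ibar i) (ibar j) (ibar l) = C i j l * cnj (C i j l)"
    by (simp add: cnj_C)
  also have "\<dots> = of_real ((cmod (C i j l))\<^sup>2)"
    by (rule complex_norm_square[symmetric])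
  finally have "C i j l * C (ibar i) (ibar j) (ibar l) = of_real ((cmod (C i j l))\<^sup>2)" .
  with True show ?thesis
    by (simp add: HB6_term_def mult.assoc)
qed (simp add: HB6_term_def C_eq_0_if_snd_ne)

lemma summable_on_HB6_term_diag_iff:
  fixes \<phi> :: "real \<Rightarrow> real"
  assumes "\<phi> 0 = 0"
  shows "(\<lambda>l. \<phi> (Re (HB6_term i (ibar i) j (ibar j) l))) summable_on I
    \<longleftrightarrow> (\<lambda>t. \<phi> (diag i t * diag j t)) summable_on UNIV"
proof -
  have "(\<lambda>l. \<phi> (Re (HB6_term i (ibar i) j (ibar j) l))) summable_on I
    \<longleftrightarrow> (\<lambda>t. \<phi> (Re (HB6_term i (ibar i) j (ibar j) (int t, 0)))) summable_on UNIV"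
  proof (rule summable_on_idxI_row_iff[OF k_tendsto])
    fix l assume "\<phi> (Re (HB6_term i (ibar i) j (ibar j) l)) \<noteq> 0"
    then show "l \<in> I \<and> snd l = 0"
      by (cases "l \<in> I \<and> snd l = 0") (simp_all add: HB6_term_diag assms)
  qed
  then show ?thesis
    by (simp add: HB6_term_diag)
qed

lemma summable_diag_product_pos_part:
  assumes i: "i \<in> I" and ip: "iplus i \<in> I"
    and neg: "summable (\<lambda>t. max 0 (- (diag i t * diag (iplus i) t)))"
  shows "summable (\<lambda>t. max 0 (diag i t * diag (iplus i) t))"
proof -
  let ?L = "HB6_term i (ibar i) (iplus i) (ibar (iplus i))"
  let ?R = "HB6_term i (iplus i) (ibar i) (ibar (iplus i))"
  have "snd i + snd (iplus i) = 2 * snd i + 1"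
    by (simp add: iplus_def)
  then have "odd (nat \<bar>snd i + snd (iplus i)\<bar>)"
    by (simp add: even_nat_iff)
  then have R: "Re (?R l) = - (cmod (C i (iplus i) l))\<^sup>2" "Im (?R l) = 0" for l
    by (simp_all add: HB6_term_conj)
  have L: "Im (?L l) = 0" for l
    by (simp add: HB6_term_diag)
  have neg_L: "(\<lambda>l. max 0 (- Re (?L l))) summable_on I"
    using neg summable_on_HB6_term_diag_iff[of "\<lambda>x. max 0 (- x)" i "iplus i"]
      summable_on_UNIV_nonneg_real_iff[of "\<lambda>t. max 0 (- (diag i t * diag (iplus i) t))"]
    by simp
  then have "neg_part_sum (\<lambda>l. Re (?L l)) I < \<infinity>"
    by (simp only: neg_part_sum_less_top_iff)
  then have "ereal_sum_converges (\<lambda>l. Re (?L l)) I"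
    unfolding ereal_sum_converges_def ..
  moreover have "ereal_sum_converges (\<lambda>l. Re (?R l)) I"
    by (rule ereal_sum_converges_nonpos) (simp add: R)
  ultimately have "ereal_sum_value (\<lambda>l. Re (?L l)) I = ereal_sum_value (\<lambda>l. Re (?R l)) I"
    using i ip L R by (intro HB6_real_parts_eq) simp_all
  also have "\<dots> \<le> 0"
    by (rule ereal_sum_value_nonpos) (simp add: R)
  finally have "(\<lambda>l. max 0 (Re (?L l))) summable_on I"
    by (intro summable_on_pos_part_if_ereal_sum_value_neq_PInf[OF neg_L]) auto
  then show ?thesis
    using summable_on_HB6_term_diag_iff[of "\<lambda>x. max 0 x" i "iplus i"]
      summable_on_UNIV_nonneg_real_iff[of "\<lambda>t. max 0 (diag i t * diag (iplus i) t)"]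
    by simp
qed

lemma summable_diag_square_step:
  assumes i: "i \<in> I" and "0 < snd i" and prev: "summable (\<lambda>t. (diag (iminus i) t)\<^sup>2)"
  shows "summable (\<lambda>t. (diag i t)\<^sup>2)"
proof -
  have ip: "iplus i \<in> I"
    using assms by (cases i) (auto simp: idxI_def iplus_def)
  define c where "c = (ladder i)\<^sup>2"
  define g where "g = (if iminus i \<in> I then (ladder (iminus i))\<^sup>2 else 0)"
  have "i \<noteq> (0, 0)"
    using \<open>0 < snd i\<close> by auto
  with ladder_pos[OF i] \<open>0 < snd i\<close> have "0 < c"
    by (simp add: c_def)
  have "0 \<le> g"
    by (simp add: g_def)
  show ?thesis
  proof (rule summable_square_if_recursive_bound[OF lam_tendsto \<open>0 < c\<close>])
    show "0 \<le> g / 2 * (diag (iminus i) t)\<^sup>2" for t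
      using \<open>0 \<le> g\<close> by simp
    show "summable (\<lambda>t. g / 2 * (diag (iminus i) t)\<^sup>2)"
      using prev by (rule summable_mult)
    fix t :: nat assume "1 \<le> t"
    define x y z where "x = diag i t" and "y = diag (iplus i) t" and "z = diag (iminus i) t"
    have "lam t * x = c * (x + y) + g * (z + x)"
      using diag_recursion[OF i ip \<open>1 \<le> t\<close>] by (simp add: x_def y_def z_def c_def g_def)
    then have "c * (x * y) = lam t * x\<^sup>2 - c * x\<^sup>2 - g * (z * x) - g * x\<^sup>2"
      by (simp add: power2_eq_square algebra_simps)
    moreover have "g * (z * x) \<le> g * ((z\<^sup>2 + x\<^sup>2) / 2)"
      using \<open>0 \<le> g\<close> sum_squares_bound[of z x] by (intro mult_left_mono) simp_all
    ultimately show "(lam t - (c + 3 / 2 * g)) * (diag i t)\<^sup>2 - g / 2 * (diag (iminus i) t)\<^sup>2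
        \<le> c * (diag i t * diag (iplus i) t)"
      unfolding x_def[symmetric] y_def[symmetric] z_def[symmetric] by (simp add: algebra_simps)
  next
    show "summable (\<lambda>t. max 0 (- (diag i t * diag (iplus i) t))) \<Longrightarrow>
        summable (\<lambda>t. max 0 (diag i t * diag (iplus i) t))"
      by (rule summable_diag_product_pos_part[OF i ip])
  qed
qed

lemma summable_diag_square_row0:
  assumes "0 < r"
  shows "summable (\<lambda>t. (diag (r, 0) t)\<^sup>2)"
proof -
  define i where "i = (r, 0 :: int)"
  have i: "i \<in> I" and ip: "iplus i \<in> I" and im: "iminus i \<in> I"
    using assms by (simp_all add: i_def idxI_def iplus_def iminus_def)
  \<comment> \<open>on the row \<open>i\<^sub>2 = 0\<close> the lower neighbour mirrors the upper one, so the recursion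
    closes without an induction hypothesis\<close>
  have "ibar i = i" "ibar (iminus i) = iplus i"
    by (simp_all add: i_def ibar_def iminus_def iplus_def)
  then have "ladder (iminus i) = ladder i" "diag (iminus i) t = diag (iplus i) t" for t
    by (metis ladder_ibar, metis diag_ibar)
  define c where "c = (ladder i)\<^sup>2"
  have "0 < c"
    using ladder_pos[OF i] assms by (simp add: c_def i_def)
  have "summable (\<lambda>t. (diag i t)\<^sup>2)"
  proof (rule summable_square_if_recursive_bound[OF lam_tendsto, of "2 * c" "\<lambda>_. 0"])
    fix t :: nat assume "1 \<le> t"
    from diag_recursion[OF i ip this] im \<open>ladder (iminus i) = ladder i\<close> \<open>diag (iminus i) t = _\<close>
    have "lam t * diag i t = 2 * c * (diag i t + diag (iplus i) t)"
      by (simp add: c_def)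
    then show "(lam t - 2 * c) * (diag i t)\<^sup>2 - 0 \<le> 2 * c * (diag i t * diag (iplus i) t)"
      by (simp add: power2_eq_square algebra_simps)
  next
    show "summable (\<lambda>t. max 0 (- (diag i t * diag (iplus i) t))) \<Longrightarrow>
        summable (\<lambda>t. max 0 (diag i t * diag (iplus i) t))"
      by (rule summable_diag_product_pos_part[OF i ip])
  qed (use \<open>0 < c\<close> in simp_all)
  then show ?thesis
    by (simp add: i_def)
qed

lemma summable_diag_square: "summable (\<lambda>t. (diag i t)\<^sup>2)"
proof -
  have nonneg_row: "summable (\<lambda>t. (diag i t)\<^sup>2)" if "snd i = int n" for i n
    using that
  proof (induction n arbitrary: i)
    case 0
    show ?case
    proof (cases "i \<in> I")
      case True
      then have "0 \<le> fst i"
        using "0" idxI_fst_nonneg by simp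
      then consider "i = (0, 0)" | "0 < fst i" "i = (fst i, 0)"
        using "0" by (cases i) force
      then show ?thesis
      proof cases
        case 1
        have "(\<lambda>t. (diag i t)\<^sup>2) = (\<lambda>t. if t = 0 then 1 else 0)"
          by (simp add: 1 diag_identity fun_eq_iff)
        then show ?thesis
          using summable_single[of 0 "\<lambda>_. 1 :: real"] by simp
      next
        case 2
        then show ?thesis
          using summable_diag_square_row0 by metis
      qed
    qed (simp add: diag_eq_0_outside)
  next
    case (Suc n)
    have "summable (\<lambda>t. (diag (iminus i) t)\<^sup>2)"
      using Suc by (simp add: iminus_def)
    with Suc.prems show ?case
      by (cases "i \<in> I") (simp_all add: summable_diag_square_step diag_eq_0_outside)
  qed
  show ?thesis
  proof (cases "0 \<le> snd i")
    case True
    then show ?thesis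
      using nonneg_row[of i "nat (snd i)"] by simp
  next
    case False
    then have "summable (\<lambda>t. (diag (ibar i) t)\<^sup>2)"
      using nonneg_row[of "ibar i" "nat (- snd i)"] by (simp add: ibar_def)
    then show ?thesis
      by (simp add: diag_ibar)
  qed
qed

lemma summable_abs_diag_product: "summable (\<lambda>t. \<bar>diag i t * diag j t\<bar>)"
proof (rule summable_comparison_test)
  show "\<exists>N. \<forall>t\<ge>N. norm \<bar>diag i t * diag j t\<bar> \<le> (diag i t)\<^sup>2 + (diag j t)\<^sup>2"
  proof (intro exI allI impI)
    fix t
    have "2 * (\<bar>diag i t\<bar> * \<bar>diag j t\<bar>) \<le> (diag i t)\<^sup>2 + (diag j t)\<^sup>2"
      using sum_squares_bound[of "\<bar>diag i t\<bar>" "\<bar>diag j t\<bar>"] by (simp add: mult.assoc)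
    moreover have "0 \<le> \<bar>diag i t\<bar> * \<bar>diag j t\<bar>"
      by simp
    ultimately show "norm \<bar>diag i t * diag j t\<bar> \<le> (diag i t)\<^sup>2 + (diag j t)\<^sup>2"
      unfolding real_norm_def abs_abs abs_mult by linarith
  qed
  show "summable (\<lambda>t. (diag i t)\<^sup>2 + (diag j t)\<^sup>2)"
    by (intro summable_add summable_diag_square)
qed

lemma summable_on_cmod_C_square: "(\<lambda>l. (cmod (C i j l))\<^sup>2) summable_on I"
proof (cases "i \<in> I \<and> j \<in> I")
  case True
  then have i: "i \<in> I" and j: "j \<in> I"
    by simp_all
  let ?L = "HB6_term i j (ibar i) (ibar j)"
  let ?R = "HB6_term i (ibar i) j (ibar j)"
  define \<sigma> :: real where "\<sigma> = (- 1) ^ nat \<bar>snd i + snd j\<bar>"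
  have L: "Re (?L l) = \<sigma> * (cmod (C i j l))\<^sup>2" "Im (?L l) = 0" for l
    by (simp_all add: HB6_term_conj \<sigma>_def)
  have R: "Im (?R l) = 0" for l
    by (simp add: HB6_term_diag)
  have "summable (\<lambda>t. \<bar>diag i t * diag j t\<bar>)"
    by (rule summable_abs_diag_product)
  then have "(\<lambda>t. diag i t * diag j t) summable_on UNIV"
    by (intro norm_summable_imp_summable_on) simp
  then have "(\<lambda>l. Re (?R l)) summable_on I"
    using summable_on_HB6_term_diag_iff[of "\<lambda>x. x" i j] by simp
  then have conv_R: "ereal_sum_converges (\<lambda>l. Re (?R l)) I"
    and fin_R: "\<bar>ereal_sum_value (\<lambda>l. Re (?R l)) I\<bar> \<noteq> \<infinity>"
    by (rule ereal_sum_finite_if_summable_on)+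
  have conv_L: "ereal_sum_converges (\<lambda>l. Re (?L l)) I"
    unfolding L by (cases "even (nat \<bar>snd i + snd j\<bar>)")
      (simp_all add: \<sigma>_def ereal_sum_converges_nonneg ereal_sum_converges_nonpos)
  have "ereal_sum_value (\<lambda>l. Re (?L l)) I = ereal_sum_value (\<lambda>l. Re (?R l)) I"
    by (rule HB6_real_parts_eq) (use i j L R conv_L conv_R in simp_all)
  with fin_R have "(\<lambda>l. Re (?L l)) summable_on I"
    by (intro summable_on_if_ereal_sum_value_finite[OF conv_L]) simp
  then have "(\<lambda>l. \<bar>Re (?L l)\<bar>) summable_on I"
    using summable_on_iff_abs_summable_on_real[THEN iffD1] by simp
  also have "(\<lambda>l. \<bar>Re (?L l)\<bar>) = (\<lambda>l. (cmod (C i j l))\<^sup>2)"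
    by (simp add: L \<sigma>_def abs_mult fun_eq_iff)
  finally show ?thesis .
next
  case False
  then have "C i j l = 0" for l
    using C_eq_0_outside by blast
  then show ?thesis
    by simp
qed

lemma lam_cmod_C_square_le:
  "lam t * (cmod (C i j (int t, snd i + snd j)))\<^sup>2
    \<le> 2 * (ladder i)\<^sup>2 * (cmod (C (iplus i) j (int t, snd i + snd j + 1)))\<^sup>2
      + 2 * (ladder j)\<^sup>2 * (cmod (C i (iplus j) (int t, snd i + snd j + 1)))\<^sup>2"
    (is "_ \<le> ?rhs")
proof (cases "1 \<le> t \<and> i \<in> I \<and> j \<in> I")
  case True
  define w where "w = snd i + snd j"
  define u where "u = ladder (int t, w)"
  define p p1 p2 where "p = cmod (C i j (int t, w))"
    and "p1 = cmod (C (iplus i) j (int t, w + 1))" and "p2 = cmod (C i (iplus j) (int t, w + 1))"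
  have "0 \<le> w * (w + 1)"
    by (cases "0 \<le> w") (simp_all add: mult_nonpos_nonpos)
  then have "0 \<le> real_of_int (w * (w + 1))"
    by (rule of_int_nonneg)
  moreover have "u = sqrt (lam t + real_of_int (w * (w + 1)))"
    by (simp add: u_def ladder_def)
  ultimately have u2: "lam t \<le> u\<^sup>2" and "0 \<le> u"
    using lam_nonneg[of t] by simp_all
  from C_ladder[of i j "(int t, w + 1)"] True
  have ladder_eq: "of_real u * C i j (int t, w)
      = of_real (ladder i) * C (iplus i) j (int t, w + 1) + of_real (ladder j) * C i (iplus j) (int t, w + 1)"
    by (simp add: row_in_idxI iminus_def u_def)
  have "u * p = cmod (of_real u * C i j (int t, w))"
    using \<open>0 \<le> u\<close> by (simp add: p_def norm_mult)
  also have "\<dots> \<le> \<bar>ladder i\<bar> * p1 + \<bar>ladder j\<bar> * p2"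
    unfolding ladder_eq by (rule order.trans[OF norm_triangle_ineq]) (simp add: p1_def p2_def norm_mult)
  finally have "u * p \<le> \<bar>ladder i\<bar> * p1 + \<bar>ladder j\<bar> * p2" .
  then have "(u * p)\<^sup>2 \<le> (\<bar>ladder i\<bar> * p1 + \<bar>ladder j\<bar> * p2)\<^sup>2"
    using \<open>0 \<le> u\<close> by (intro power_mono) (simp_all add: p_def)
  also have "\<dots> \<le> 2 * (\<bar>ladder i\<bar> * p1)\<^sup>2 + 2 * (\<bar>ladder j\<bar> * p2)\<^sup>2"
    using sum_squares_bound[of "\<bar>ladder i\<bar> * p1" "\<bar>ladder j\<bar> * p2"]
    unfolding power2_sum by linarith
  also have "\<dots> = 2 * (ladder i)\<^sup>2 * p1\<^sup>2 + 2 * (ladder j)\<^sup>2 * p2\<^sup>2"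
    by (simp add: power_mult_distrib)
  finally have "u\<^sup>2 * p\<^sup>2 \<le> 2 * (ladder i)\<^sup>2 * p1\<^sup>2 + 2 * (ladder j)\<^sup>2 * p2\<^sup>2"
    by (simp add: power_mult_distrib)
  moreover have "lam t * p\<^sup>2 \<le> u\<^sup>2 * p\<^sup>2"
    using u2 by (intro mult_right_mono) simp_all
  ultimately show ?thesis
    by (simp add: w_def p_def p1_def p2_def)
next
  case False
  then have "lam t * (cmod (C i j (int t, snd i + snd j)))\<^sup>2 = 0"
    using lam_0 C_eq_0_outside[of i j] by (cases t) auto
  moreover have "0 \<le> ?rhs"
    by simp
  ultimately show ?thesis
    by linarith
qed

lemma summable_weighted_row:
  "summable (\<lambda>t. lam t ^ N * (cmod (C i j (int t, snd i + snd j)))\<^sup>2)"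
proof (induction N arbitrary: i j)
  case 0
  have "(\<lambda>l. (cmod (C i j l))\<^sup>2) summable_on I
      \<longleftrightarrow> (\<lambda>t. (cmod (C i j (int t, snd i + snd j)))\<^sup>2) summable_on UNIV"
  proof (rule summable_on_idxI_row_iff[OF k_tendsto])
    fix l assume "(cmod (C i j l))\<^sup>2 \<noteq> 0"
    then show "l \<in> I \<and> snd l = snd i + snd j"
      by (intro C_neq_0_imp) simp
  qed
  with summable_on_cmod_C_square show ?case
    by (simp add: summable_on_UNIV_nonneg_real_iff)
next
  case (Suc N)
  let ?f = "\<lambda>i j t. lam t ^ N * (cmod (C i j (int t, snd i + snd j)))\<^sup>2"
  show ?case
  proof (rule summable_comparison_test')
    show "summable (\<lambda>t. 2 * (ladder i)\<^sup>2 * ?f (iplus i) j t + 2 * (ladder j)\<^sup>2 * ?f i (iplus j) t)"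
      by (intro summable_add summable_mult Suc.IH)
    fix t
    have "lam t ^ Suc N * (cmod (C i j (int t, snd i + snd j)))\<^sup>2
        = lam t ^ N * (lam t * (cmod (C i j (int t, snd i + snd j)))\<^sup>2)"
      by simp
    also have "\<dots> \<le> lam t ^ N * (2 * (ladder i)\<^sup>2 * (cmod (C (iplus i) j (int t, snd i + snd j + 1)))\<^sup>2
        + 2 * (ladder j)\<^sup>2 * (cmod (C i (iplus j) (int t, snd i + snd j + 1)))\<^sup>2)"
      using lam_cmod_C_square_le lam_nonneg by (intro mult_left_mono) simp_all
    also have "\<dots> = 2 * (ladder i)\<^sup>2 * ?f (iplus i) j t + 2 * (ladder j)\<^sup>2 * ?f i (iplus j) t"
      by (simp add: iplus_def algebra_simps)
    finally show "norm (lam t ^ Suc N * (cmod (C i j (int t, snd i + snd j)))\<^sup>2)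
        \<le> 2 * (ladder i)\<^sup>2 * ?f (iplus i) j t + 2 * (ladder j)\<^sup>2 * ?f i (iplus j) t"
      using lam_nonneg by simp
  qed
qed

lemma summable_on_weighted_cmod_C_square:
  "(\<lambda>l. \<bar>lamZ lam k (fst l)\<bar> ^ N * (cmod (C i j l))\<^sup>2) summable_on I"
proof -
  have "(\<lambda>l. \<bar>lamZ lam k (fst l)\<bar> ^ N * (cmod (C i j l))\<^sup>2) summable_on I
      \<longleftrightarrow> (\<lambda>t. \<bar>lamZ lam k (fst (int t, snd i + snd j))\<bar> ^ N
          * (cmod (C i j (int t, snd i + snd j)))\<^sup>2) summable_on UNIV"
  proof (rule summable_on_idxI_row_iff[OF k_tendsto])
    fix l assume "\<bar>lamZ lam k (fst l)\<bar> ^ N * (cmod (C i j l))\<^sup>2 \<noteq> 0"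
    then show "l \<in> I \<and> snd l = snd i + snd j"
      by (intro C_neq_0_imp) auto
  qed
  with summable_weighted_row[of N i j] show ?thesis
    using lam_nonneg by (simp add: summable_on_UNIV_nonneg_real_iff)
qed

end

theorem proposition5p2:
  fixes lam :: "nat \<Rightarrow> real" and k :: "nat \<Rightarrow> nat"
    and C :: "int \<times> int \<Rightarrow> int \<times> int \<Rightarrow> int \<times> int \<Rightarrow> complex"
  assumes "candidate_spectrum lam k C"
    and "HB1 k C" and "HB2 k C" and "HB3 k C" and "HB4 k C" and "HB5 lam k C"
    and "HB6_weak k C"
    and "i \<in> idxI k" and "j \<in> idxI k"
  shows "(\<lambda>l. \<bar>lamZ lam k (fst l)\<bar> ^ N * (cmod (C i j l))\<^sup>2) summable_on idxI k"
proof -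
  interpret weak_HB_spectrum lam k C
    using assms(1-7) by unfold_locales
  show ?thesis
    by (rule summable_on_weighted_cmod_C_square)
qed

end
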